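(* Let $F\colon X\to 2^Y$ be a generalized tri-quotient map. Then the map $\Phi\colon 2^X\to 2^Y$, $\Phi(A)=\mathrm{cl}_Y(F(A))$ where $F(A)=\bigcup\{F(x):x\in A\}$, is monotone and set tri-quotient (with $\mathcal{S}(X)=2^X$).
   Context: All spaces are completely regular; $2^X$ denotes the family of subsets of $X$ and $\mathcal{T}(X)$ the topology of $X$. A set-valued map $F\colon X\to 2^Y$ is generalized tri-quotient if to each open $U\subset X$ one can assign an open $t(U)\subset Y$ such that: $t(U)\subset F(U)$; $t(X)=Y$; $U\subset V$ implies $t(U)\subset t(V)$; if $y\in t(U)$ and $\mathcal{W}$ is a cover of $F^{-1}(y)\cap U$ by open subsets of $X$ (where $F^{-1}(y)=\{x\in X:y\in F(x)\}$), then $y\in t(\bigcup\mathcal{E})$ for some finite $\mathcal{E}\subset\mathcal{W}$. For $\mathcal{S}(X)\subset 2^X$, a map $\Phi\colon\mathcal{S}(X)\to 2^Y$ is monotone if $K\subset L$ implies $\Phi(K)\subset\Phi(L)$; it is set tri-quotient if there is a map $s\colon\mathcal{T}(X)\to\mathcal{T}(Y)$ such that: (str1) $s(U)\subset\bigcup\{\Phi(K):K\in\mathcal{S}(X),\ K\subset U\}$; (str2) $s(X)=Y$; (str3) $U\subset V$ implies $s(U)\subset s(V)$; (str4) if $y\in s(U)$ and $\mathcal{W}$ is a cover of $\bigcup\{K\in \Phi^{-1}(y):K\subset U\}$ by open subsets of $X$, then $y\in s(\bigcup\mathcal{E})$ for some finite $\mathcal{E}\subset\mathcal{W}$; here $\Phi^{-1}(y)=\{K\in\mathcal{S}(X):y\in\Phi(K)\}$.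 *)

theory Defs
  imports "HOL-Analysis.Analysis"
begin

definition fibre :: "'a topology \<Rightarrow> ('a \<Rightarrow> 'b set) \<Rightarrow> 'b \<Rightarrow> 'a set" where
  "fibre X F y = {x \<in> topspace X. y \<in> F x}"

definition set_valued_map :: "'a topology \<Rightarrow> 'b topology \<Rightarrow> ('a \<Rightarrow> 'b set) \<Rightarrow> bool" where
  "set_valued_map X Y F \<longleftrightarrow> (\<forall>x \<in> topspace X. F x \<subseteq> topspace Y)"

definition gen_tri_quotient :: "'a topology \<Rightarrow> 'b topology \<Rightarrow> ('a \<Rightarrow> 'b set) \<Rightarrow> bool" where
  "gen_tri_quotient X Y F \<longleftrightarrow>
     (\<exists>t :: 'a set \<Rightarrow> 'b set.
        (\<forall>U. openin X U \<longrightarrow> openin Y (t U) \<and> t U \<subseteq> \<Union> (F ` U)) \<and>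
        t (topspace X) = topspace Y \<and>
        (\<forall>U V. openin X U \<longrightarrow> openin X V \<longrightarrow> U \<subseteq> V \<longrightarrow> t U \<subseteq> t V) \<and>
        (\<forall>U y \<W>. openin X U \<longrightarrow> y \<in> t U \<longrightarrow> (\<forall>W \<in> \<W>. openin X W) \<longrightarrow>
            fibre X F y \<inter> U \<subseteq> \<Union> \<W> \<longrightarrow>
            (\<exists>\<E>. finite \<E> \<and> \<E> \<subseteq> \<W> \<and> y \<in> t (\<Union> \<E>))))"

definition monotone_setmap :: "'a set set \<Rightarrow> ('a set \<Rightarrow> 'b set) \<Rightarrow> bool" where
  "monotone_setmap S \<Phi> \<longleftrightarrow> (\<forall>K \<in> S. \<forall>L \<in> S. K \<subseteq> L \<longrightarrow> \<Phi> K \<subseteq> \<Phi> L)"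

definition set_tri_quotient ::
  "'a topology \<Rightarrow> 'b topology \<Rightarrow> 'a set set \<Rightarrow> ('a set \<Rightarrow> 'b set) \<Rightarrow> bool" where
  "set_tri_quotient X Y S \<Phi> \<longleftrightarrow>
     (\<exists>s :: 'a set \<Rightarrow> 'b set.
        (\<forall>U. openin X U \<longrightarrow> openin Y (s U) \<and>
              s U \<subseteq> \<Union> {\<Phi> K | K. K \<in> S \<and> K \<subseteq> U}) \<and>
        s (topspace X) = topspace Y \<and>
        (\<forall>U V. openin X U \<longrightarrow> openin X V \<longrightarrow> U \<subseteq> V \<longrightarrow> s U \<subseteq> s V) \<and>
        (\<forall>U y \<W>. openin X U \<longrightarrow> y \<in> s U \<longrightarrow> (\<forall>W \<in> \<W>. openin X W) \<longrightarrow>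
            \<Union> {K. K \<in> S \<and> y \<in> \<Phi> K \<and> K \<subseteq> U} \<subseteq> \<Union> \<W> \<longrightarrow>
            (\<exists>\<E>. finite \<E> \<and> \<E> \<subseteq> \<W> \<and> y \<in> s (\<Union> \<E>))))"

end

theory Submission
  imports Defs
begin

text \<open>The operator t witnessing that F is generalized tri-quotient also witnesses that \<Phi> is
  set tri-quotient, as soon as \<Phi> {x} contains F x: for x \<in> U with y \<in> F x the singleton {x}
  lies below U and belongs to the \<Phi>-preimage of y, so (str1) and the covering hypothesis of (str4)
  reduce to the corresponding conditions on t.\<close>

lemma fibre_inter_subset_Union_singletons:
  assumes "\<forall>x \<in> topspace X. F x \<subseteq> \<Phi> {x}"
  shows "fibre X F y \<inter> U \<subseteq> \<Union> {K. K \<in> Pow (topspace X) \<and> y \<in> \<Phi> K \<and> K \<subseteq> U}"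
proof
  fix x assume "x \<in> fibre X F y \<inter> U"
  then have "{x} \<in> {K. K \<in> Pow (topspace X) \<and> y \<in> \<Phi> K \<and> K \<subseteq> U}"
    using assms by (auto simp: fibre_def)
  then show "x \<in> \<Union> {K. K \<in> Pow (topspace X) \<and> y \<in> \<Phi> K \<and> K \<subseteq> U}"
    by blast
qed

lemma image_Union_subset_Union_singletons:
  assumes "\<forall>x \<in> topspace X. F x \<subseteq> \<Phi> {x}" and "U \<subseteq> topspace X"
  shows "\<Union> (F ` U) \<subseteq> \<Union> {\<Phi> K | K. K \<in> Pow (topspace X) \<and> K \<subseteq> U}"
proof (rule UN_least)
  fix x assume "x \<in> U"
  then have "\<Phi> {x} \<in> {\<Phi> K | K. K \<in> Pow (topspace X) \<and> K \<subseteq> U}"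
    using assms(2) by blast
  with assms \<open>x \<in> U\<close>
  show "F x \<subseteq> \<Union> {\<Phi> K | K. K \<in> Pow (topspace X) \<and> K \<subseteq> U}"
    by blast
qed

lemma gen_tri_quotient_imp_set_tri_quotient:
  assumes "gen_tri_quotient X Y F" and "\<forall>x \<in> topspace X. F x \<subseteq> \<Phi> {x}"
  shows "set_tri_quotient X Y (Pow (topspace X)) \<Phi>"
proof -
  obtain t where
    t_open: "\<forall>U. openin X U \<longrightarrow> openin Y (t U) \<and> t U \<subseteq> \<Union> (F ` U)"
    and t_top: "t (topspace X) = topspace Y"
    and t_mono: "\<forall>U V. openin X U \<longrightarrow> openin X V \<longrightarrow> U \<subseteq> V \<longrightarrow> t U \<subseteq> t V"
    and t_cover: "\<forall>U y \<W>. openin X U \<longrightarrow> y \<in> t U \<longrightarrow> (\<forall>W \<in> \<W>. openin X W) \<longrightarrow>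
        fibre X F y \<inter> U \<subseteq> \<Union> \<W> \<longrightarrow> (\<exists>\<E>. finite \<E> \<and> \<E> \<subseteq> \<W> \<and> y \<in> t (\<Union> \<E>))"
    using assms(1) unfolding gen_tri_quotient_def by - (elim exE conjE, rule that)
  show ?thesis
    unfolding set_tri_quotient_def
  proof (intro exI[of _ t] conjI allI impI t_top)
    fix U assume U: "openin X U"
    then show "openin Y (t U)" using t_open by simp
    show "t U \<subseteq> \<Union> {\<Phi> K | K. K \<in> Pow (topspace X) \<and> K \<subseteq> U}"
      using t_open[rule_format, OF U]
        image_Union_subset_Union_singletons[OF assms(2) openin_subset[OF U]]
      by (rule subset_trans[OF conjunct2])
  next
    fix U V assume "openin X U" "openin X V" "U \<subseteq> V"
    then show "t U \<subseteq> t V" using t_mono by simp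
  next
    fix U y \<W>
    assume "openin X U" "y \<in> t U" "\<forall>W \<in> \<W>. openin X W"
      and "\<Union> {K. K \<in> Pow (topspace X) \<and> y \<in> \<Phi> K \<and> K \<subseteq> U} \<subseteq> \<Union> \<W>"
    moreover from this(4) have "fibre X F y \<inter> U \<subseteq> \<Union> \<W>"
      by (rule subset_trans[OF fibre_inter_subset_Union_singletons[OF assms(2)]])
    ultimately show "\<exists>\<E>. finite \<E> \<and> \<E> \<subseteq> \<W> \<and> y \<in> t (\<Union> \<E>)"
      using t_cover by simp
  qed
qed

theorem lemma2p1:
  fixes X :: "'a topology" and Y :: "'b topology" and F :: "'a \<Rightarrow> 'b set"
  assumes "completely_regular_space X" and "completely_regular_space Y"
    and "set_valued_map X Y F"
    and "gen_tri_quotient X Y F"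
  shows "monotone_setmap (Pow (topspace X)) (\<lambda>A. Y closure_of (\<Union> (F ` A)))
     \<and> set_tri_quotient X Y (Pow (topspace X)) (\<lambda>A. Y closure_of (\<Union> (F ` A)))"
proof
  show "monotone_setmap (Pow (topspace X)) (\<lambda>A. Y closure_of (\<Union> (F ` A)))"
    unfolding monotone_setmap_def by (auto intro!: closure_of_mono)
  have "\<forall>x \<in> topspace X. F x \<subseteq> Y closure_of (\<Union> (F ` {x}))"
    using assms(3) by (simp add: set_valued_map_def closure_of_subset)
  then show "set_tri_quotient X Y (Pow (topspace X)) (\<lambda>A. Y closure_of (\<Union> (F ` A)))"
    by (rule gen_tri_quotient_imp_set_tri_quotient[OF assms(4)])
qed

end
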